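(* Let $\mathbf{M}$ be a real $n\times n$ non-negative matrix whose columns all sum to $\alpha$, written in lower block-triangular form with irreducible diagonal blocks $\mathbf{B}_0,\dots,\mathbf{B}_{t-1}$ and coordinate sets $S_0,\dots,S_{t-1}$. Let $s$ be the algebraic multiplicity of the eigenvalue $\rho(\mathbf{M})=\alpha$ and let $j_0,\dots,j_{s-1}$ be the indices of the diagonal blocks having eigenvalue $\alpha$. For each $r\in[s]$ let $\mathbf{l}_{j_r}$ be a left eigenvector of $\mathbf{M}$ for $\alpha$ which equals $1$ on every coordinate of $S_{j_r}$, vanishes on $S_{j_{r'}}$ for $r'\neq r$, and satisfies $\operatorname{supp}(\mathbf{l}_{j_r})\subseteq S_{j_r}\cup\bigcup_{i<j_r,\,i\rightsquigarrow j_r}S_i$. Then \[\sum_{r\in[s]}\mathbf{l}_{j_r}=\mathbf{1},\] the all-ones row vector.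
   Context: Lower block-triangular form: $\mathbf{M}$ has square irreducible non-negative diagonal blocks $\mathbf{B}_0,\dots,\mathbf{B}_{t-1}$ of sizes $n_0,\dots,n_{t-1}$, zero blocks above the diagonal, and non-negative blocks $*_{i,j}$ ($n_i\times n_j$) below the diagonal; $S_j=\{\sum_{i<j}n_i,\dots,\sum_{i\le j}n_i-1\}$. For $i<j$, $i\rightsquigarrow j$ means there is a sequence $i=i_0<i_1<\dots<i_m=j$ with $*_{i_{r+1},i_r}\neq\mathbf{0}$ for all $r$. $[s]=\{0,\dots,s-1\}$. *)

theory Defs
  imports Complex_Main
begin

(* Matrices are functions nat => nat => real, meaningful on indices < n.
   Block sizes ns 0, ..., ns (t-1).  Block j occupies the coordinate set S_j. *)

definition blockset :: "(nat \<Rightarrow> nat) \<Rightarrow> nat \<Rightarrow> nat set" where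
  "blockset ns j = {(\<Sum>i<j. ns i) ..< (\<Sum>i<Suc j. ns i)}"

definition irreducible_on :: "(nat \<Rightarrow> nat \<Rightarrow> real) \<Rightarrow> nat set \<Rightarrow> bool" where
  "irreducible_on M S \<longleftrightarrow>
     (\<forall>p\<in>S. \<forall>q\<in>S. (\<lambda>a b. a \<in> S \<and> b \<in> S \<and> M a b \<noteq> 0)\<^sup>*\<^sup>* p q)"

definition lower_block_triangular ::
  "nat \<Rightarrow> (nat \<Rightarrow> nat \<Rightarrow> real) \<Rightarrow> nat \<Rightarrow> (nat \<Rightarrow> nat) \<Rightarrow> bool" where
  "lower_block_triangular n M t ns \<longleftrightarrow>
     (\<forall>i<t. 0 < ns i) \<and> (\<Sum>i<t. ns i) = n \<and>
     (\<forall>i<t. irreducible_on M (blockset ns i)) \<and>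
     (\<forall>i<t. \<forall>j<t. i < j \<longrightarrow>
        (\<forall>p\<in>blockset ns i. \<forall>q\<in>blockset ns j. M p q = 0))"

definition block_nonzero :: "(nat \<Rightarrow> nat \<Rightarrow> real) \<Rightarrow> (nat \<Rightarrow> nat) \<Rightarrow> nat \<Rightarrow> nat \<Rightarrow> bool" where
  "block_nonzero M ns a b \<longleftrightarrow> (\<exists>p\<in>blockset ns a. \<exists>q\<in>blockset ns b. M p q \<noteq> 0)"

definition leads_to :: "(nat \<Rightarrow> nat \<Rightarrow> real) \<Rightarrow> (nat \<Rightarrow> nat) \<Rightarrow> nat \<Rightarrow> nat \<Rightarrow> bool" where
  "leads_to M ns i j \<longleftrightarrow> (\<lambda>a b. a < b \<and> block_nonzero M ns b a)\<^sup>+\<^sup>+ i j"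

definition block_has_eigenvalue :: "(nat \<Rightarrow> nat \<Rightarrow> real) \<Rightarrow> nat set \<Rightarrow> real \<Rightarrow> bool" where
  "block_has_eigenvalue M S \<alpha> \<longleftrightarrow>
     (\<exists>v :: nat \<Rightarrow> real. (\<exists>p\<in>S. v p \<noteq> 0) \<and>
        (\<forall>p\<in>S. (\<Sum>q\<in>S. M p q * v q) = \<alpha> * v p))"

definition left_eigenvector :: "nat \<Rightarrow> (nat \<Rightarrow> nat \<Rightarrow> real) \<Rightarrow> real \<Rightarrow> (nat \<Rightarrow> real) \<Rightarrow> bool" where
  "left_eigenvector n M \<alpha> l \<longleftrightarrow>
     (\<exists>p<n. l p \<noteq> 0) \<and> (\<forall>q<n. (\<Sum>p<n. l p * M p q) = \<alpha> * l q)"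

end

theory Submission
  imports Defs "Jordan_Normal_Form.Char_Poly"
begin

text \<open>Put \<open>d = 1 - \<Sum>\<^sub>r l\<^sub>j\<^sub>r\<close>. As every column of \<open>M\<close> sums to \<open>\<alpha>\<close>, the all-ones row vector is a
  left \<open>\<alpha>\<close>-eigenvector, hence \<open>d M = \<alpha> d\<close>; moreover \<open>d\<close> vanishes on every block with eigenvalue
  \<open>\<alpha>\<close>. Going through the blocks from the last one backwards, once \<open>d\<close> vanishes on all later blocks,
  block triangularity makes the restriction of \<open>d\<close> to \<open>S\<^sub>j\<close> a left \<open>\<alpha>\<close>-eigenvector of \<open>B\<^sub>j\<close> unless it
  is zero. A matrix and its transpose have the same eigenvalues, so \<open>d\<close> is zero on \<open>S\<^sub>j\<close> also when
  \<open>\<alpha>\<close> is not an eigenvalue of \<open>B\<^sub>j\<close>. Thus \<open>d = 0\<close>.\<close>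

lemma eigenvalue_transpose_mat:
  assumes "(A :: 'a :: field mat) \<in> carrier_mat n n"
  shows "eigenvalue (transpose_mat A) e \<longleftrightarrow> eigenvalue A e"
  using assms by (simp add: eigenvalue_root_char_poly[of _ n])

lemma block_has_eigenvalue_iff_eigenvalue:
  assumes f: "bij_betw f {..<card S} S"
  shows "block_has_eigenvalue M S \<alpha> \<longleftrightarrow>
    eigenvalue (mat (card S) (card S) (\<lambda>(i, j). M (f i) (f j))) \<alpha>"
    (is "_ \<longleftrightarrow> eigenvalue ?A \<alpha>")
proof
  assume "block_has_eigenvalue M S \<alpha>"
  then obtain v where v: "\<exists>p\<in>S. v p \<noteq> 0" "\<forall>p\<in>S. (\<Sum>q\<in>S. M p q * v q) = \<alpha> * v p"
    unfolding block_has_eigenvalue_def by blast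
  define w where "w = vec (card S) (\<lambda>i. v (f i))"
  have "w \<noteq> 0\<^sub>v (card S)"
  proof
    assume "w = 0\<^sub>v (card S)"
    then have "v (f i) = 0" if "i < card S" for i
      using that unfolding w_def by (metis index_vec index_zero_vec(1))
    moreover obtain p where "p \<in> S" "v p \<noteq> 0" using v(1) by blast
    ultimately show False
      using bij_betw_imp_surj_on[OF f] by force
  qed
  moreover have "?A *\<^sub>v w = \<alpha> \<cdot>\<^sub>v w"
  proof (rule eq_vecI)
    fix i assume "i < dim_vec (\<alpha> \<cdot>\<^sub>v w)"
    then have i: "i < card S" by (simp add: w_def)
    have "(?A *\<^sub>v w) $ i = (\<Sum>j<card S. M (f i) (f j) * v (f j))"
      using i by (simp add: w_def scalar_prod_def lessThan_atLeast0)
    also have "\<dots> = (\<Sum>q\<in>S. M (f i) q * v q)"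
      using sum.reindex_bij_betw[OF f, of "\<lambda>q. M (f i) q * v q"] .
    also have "\<dots> = (\<alpha> \<cdot>\<^sub>v w) $ i"
      using v(2) i f by (simp add: w_def bij_betwE)
    finally show "(?A *\<^sub>v w) $ i = (\<alpha> \<cdot>\<^sub>v w) $ i" .
  qed (simp add: w_def)
  ultimately show "eigenvalue ?A \<alpha>"
    unfolding eigenvalue_def eigenvector_def by (intro exI[of _ w]) (simp add: w_def)
next
  assume "eigenvalue ?A \<alpha>"
  then obtain w where w: "w \<in> carrier_vec (card S)" "w \<noteq> 0\<^sub>v (card S)" "?A *\<^sub>v w = \<alpha> \<cdot>\<^sub>v w"
    unfolding eigenvalue_def eigenvector_def by auto
  define v where "v p = w $ inv_into {..<card S} f p" for p
  have v_f: "v (f i) = w $ i" if "i < card S" for i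
    using that f by (simp add: v_def bij_betw_inv_into_left)
  show "block_has_eigenvalue M S \<alpha>"
    unfolding block_has_eigenvalue_def
  proof (intro exI[of _ v] conjI ballI)
    obtain i where "i < card S" "w $ i \<noteq> 0"
      using w(1,2) by (auto simp: vec_eq_iff)
    then show "\<exists>p\<in>S. v p \<noteq> 0"
      using v_f f by (metis bij_betwE lessThan_iff)
  next
    fix p assume "p \<in> S"
    then obtain i where i: "i < card S" and p: "p = f i"
      using bij_betw_imp_surj_on[OF f] by force
    have "(\<Sum>q\<in>S. M p q * v q) = (\<Sum>j<card S. M (f i) (f j) * w $ j)"
      using sum.reindex_bij_betw[OF f, of "\<lambda>q. M p q * v q"] v_f p by simp
    also have "\<dots> = (?A *\<^sub>v w) $ i"
      using i w(1) by (simp add: scalar_prod_def lessThan_atLeast0)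
    also have "\<dots> = \<alpha> * v p"
      using w(3) i w(1) v_f p by simp
    finally show "(\<Sum>q\<in>S. M p q * v q) = \<alpha> * v p" .
  qed
qed

lemma block_has_eigenvalue_transpose:
  assumes "finite S"
  shows "block_has_eigenvalue (\<lambda>p q. M q p) S \<alpha> \<longleftrightarrow> block_has_eigenvalue M S \<alpha>"
proof -
  obtain f where f: "bij_betw f {..<card S} S"
    using ex_bij_betw_nat_finite[OF assms] by (auto simp: lessThan_atLeast0)
  let ?A = "mat (card S) (card S) (\<lambda>(i, j). M (f i) (f j))"
  have "mat (card S) (card S) (\<lambda>(i, j). M (f j) (f i)) = transpose_mat ?A"
    by auto
  then show ?thesis
    using block_has_eigenvalue_iff_eigenvalue[OF f]
      eigenvalue_transpose_mat[of ?A "card S"] by simp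
qed

lemma blockset_subset:
  assumes "j < t"
  shows "blockset ns j \<subseteq> {..<\<Sum>i<t. ns i}"
proof -
  have "(\<Sum>i<Suc j. ns i) \<le> (\<Sum>i<t. ns i)"
    using assms by (intro sum_mono2) auto
  then show ?thesis by (auto simp: blockset_def)
qed

lemma ex_blockset:
  assumes "p < (\<Sum>i<t. ns i)"
  shows "\<exists>j<t. p \<in> blockset ns j"
  using assms
proof (induction t)
  case (Suc t)
  then show ?case
    by (cases "p < (\<Sum>i<t. ns i)") (auto simp: blockset_def intro: less_SucI)
qed simp

lemma sum_column_eq_sum_diagonal_block:
  assumes lbt: "lower_block_triangular n M t ns"
    and j: "j < t" and q: "q \<in> blockset ns j"
    and later_zero: "\<forall>i<t. j < i \<longrightarrow> (\<forall>p\<in>blockset ns i. d p = 0)"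
  shows "(\<Sum>p<n. d p * M p q) = (\<Sum>p\<in>blockset ns j. d p * M p q)"
proof (rule sum.mono_neutral_right)
  have n: "n = (\<Sum>i<t. ns i)" using lbt unfolding lower_block_triangular_def by simp
  show "blockset ns j \<subseteq> {..<n}" using blockset_subset[OF j] n by simp
  show "\<forall>p\<in>{..<n} - blockset ns j. d p * M p q = 0"
  proof
    fix p assume "p \<in> {..<n} - blockset ns j"
    then obtain i where i: "i < t" "p \<in> blockset ns i" "i \<noteq> j"
      using ex_blockset[of p ns t] n by auto
    show "d p * M p q = 0"
    proof (cases "i < j")
      case True
      then have "M p q = 0"
        using lbt i(1,2) j q unfolding lower_block_triangular_def by blast
      then show ?thesis by simp
    next
      case False
      then show ?thesis using later_zero i by auto
    qed
  qed
qed simp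

lemma left_eigenvector_eq_zero_if_zero_on_eigenblocks:
  fixes d :: "nat \<Rightarrow> real"
  assumes lbt: "lower_block_triangular n M t ns"
    and d_eig: "\<forall>q<n. (\<Sum>p<n. d p * M p q) = \<alpha> * d q"
    and d_zero: "\<forall>j<t. block_has_eigenvalue M (blockset ns j) \<alpha> \<longrightarrow>
                   (\<forall>p\<in>blockset ns j. d p = 0)"
  shows "\<forall>p<n. d p = 0"
proof -
  have n: "n = (\<Sum>i<t. ns i)" using lbt unfolding lower_block_triangular_def by simp
  have "\<forall>p\<in>blockset ns j. d p = 0" if "j < t" for j
    using that
  proof (induction "t - j" arbitrary: j rule: less_induct)
    case less
    have later_zero: "\<forall>i<t. j < i \<longrightarrow> (\<forall>p\<in>blockset ns i. d p = 0)"
      using less by (metis diff_less_mono2)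
    have "block_has_eigenvalue M (blockset ns j) \<alpha>" if "\<exists>p\<in>blockset ns j. d p \<noteq> 0"
    proof -
      have "(\<Sum>p\<in>blockset ns j. M p q * d p) = \<alpha> * d q" if q: "q \<in> blockset ns j" for q
      proof -
        have "q < n" using blockset_subset[OF less.prems, of ns] q n by auto
        then show ?thesis
          using sum_column_eq_sum_diagonal_block[OF lbt less.prems q later_zero] d_eig
          by (simp add: mult.commute)
      qed
      then have "block_has_eigenvalue (\<lambda>q p. M p q) (blockset ns j) \<alpha>"
        using that unfolding block_has_eigenvalue_def by blast
      moreover have "finite (blockset ns j)" by (simp add: blockset_def)
      ultimately show ?thesis using block_has_eigenvalue_transpose by blast
    qed
    then show ?case using d_zero less.prems by blast
  qed
  then show ?thesis using ex_blockset[of _ ns t] n by blast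
qed

theorem mainTheorem3:
  fixes n t :: nat and M :: "nat \<Rightarrow> nat \<Rightarrow> real" and ns :: "nat \<Rightarrow> nat"
    and \<alpha> :: real and J :: "nat set" and l :: "nat \<Rightarrow> nat \<Rightarrow> real"
  assumes nonneg: "\<forall>p<n. \<forall>q<n. 0 \<le> M p q"
    and colsum: "\<forall>q<n. (\<Sum>p<n. M p q) = \<alpha>"
    and lbt: "lower_block_triangular n M t ns"
    and J_def: "J = {j. j < t \<and> block_has_eigenvalue M (blockset ns j) \<alpha>}"
    and eig: "\<forall>j\<in>J. left_eigenvector n M \<alpha> (l j)"
    and one: "\<forall>j\<in>J. \<forall>p\<in>blockset ns j. l j p = 1"
    and zero: "\<forall>j\<in>J. \<forall>j'\<in>J. j' \<noteq> j \<longrightarrow> (\<forall>p\<in>blockset ns j'. l j p = 0)"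
    and supp: "\<forall>j\<in>J. \<forall>p<n. l j p \<noteq> 0 \<longrightarrow>
                 p \<in> blockset ns j \<or> (\<exists>i<j. leads_to M ns i j \<and> p \<in> blockset ns i)"
  shows "\<forall>q<n. (\<Sum>j\<in>J. l j q) = 1"
proof -
  define d where "d q = 1 - (\<Sum>j\<in>J. l j q)" for q
  have "finite J" using J_def by auto
  have d_eig: "\<forall>q<n. (\<Sum>p<n. d p * M p q) = \<alpha> * d q"
  proof (intro allI impI)
    fix q assume "q < n"
    have "(\<Sum>p<n. (\<Sum>j\<in>J. l j p) * M p q) = (\<Sum>j\<in>J. \<Sum>p<n. l j p * M p q)"
      by (simp add: sum_distrib_right sum.swap[of _ "{..<n}"])
    also have "\<dots> = (\<Sum>j\<in>J. \<alpha> * l j q)"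
      using eig \<open>q < n\<close> unfolding left_eigenvector_def by simp
    finally show "(\<Sum>p<n. d p * M p q) = \<alpha> * d q"
      using colsum \<open>q < n\<close> by (simp add: d_def algebra_simps sum_subtractf sum_distrib_left)
  qed
  have d_zero: "d p = 0" if "j \<in> J" and "p \<in> blockset ns j" for j p
  proof -
    have "(\<Sum>j'\<in>J. l j' p) = l j p + (\<Sum>j'\<in>J - {j}. l j' p)"
      using \<open>finite J\<close> that(1) by (simp add: sum.remove)
    then show ?thesis
      using one zero that by (simp add: d_def sum.neutral)
  qed
  have "\<forall>p<n. d p = 0"
    by (rule left_eigenvector_eq_zero_if_zero_on_eigenblocks[OF lbt d_eig])
      (use d_zero J_def in auto)
  then show ?thesis by (simp add: d_def)
qed

end
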